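(* Let $\tau\in\mathcal A_n$ be a permutation that is not simple. Then there exist $m$ with $2\le m\le n-1$, a simple permutation $\pi\in\mathcal A_m$, and $\sigma\in\mathcal A_{n-m+1}$ such that $\tau=\pi[\sigma]$; moreover the simple permutation $\pi$ is uniquely determined by $\tau$.
   Context: $\mathcal A_{n}$ is the set of permutations $w\in S_{n}$ (one-line notation $w_1\cdots w_n$) avoiding all six vincular patterns below, where $w$ contains - $\underline{32}\,\underline{41}$ if there are $i,j$ with $i+2\le j\le n-1$ and $w_{j+1}<w_{i+1}<w_i<w_j$; - $\underline{14}\,\underline{23}$ if there are such $i,j$ with $w_i<w_j<w_{j+1}<w_{i+1}$; - $\underline{41}\,\underline{32}$ if there are such $i,j$ with $w_{i+1}<w_{j+1}<w_j<w_i$; - $\underline{23}\,\underline{14}$ if there are such $i,j$ with $w_j<w_i<w_{i+1}<w_{j+1}$; - $\underline{23}\,\underline{1}$ if there is $i$ with $i+1\le n-1$ and $w_n<w_i<w_{i+1}$; - $\underline{1}\,\underline{32}$ if there is $j$ with $2\le j\le n-1$ and $w_1<w_{j+1}<w_j$. A permutation $\pi\in S_n$ is simple if there is no interval of positions $\{i,i+1,\dots,j\}$ with $2\le j-i+1\le n-1$ such that $\{\pi_i,\dots,\pi_j\}$ is a set of consecutive integers (so every permutation of length $\le2$ is simple). Inflation at $1$: for $\pi\in S_n$ with $\pi_r=1$ and $\sigma\in S_m$, $\pi[\sigma]=(\pi_1+m-1)\cdots(\pi_{r-1}+m-1)\,\sigma_1\cdots\sigma_m\,(\pi_{r+1}+m-1)\cdots(\pi_n+m-1)\in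 S_{n+m-1}$. *)

theory Defs
  imports Main
begin

text \<open>Permutations of length n in one-line notation, as lists of values 1..n.
  Positions are 1-based: the entry w_i is  pe w i = w ! (i - 1).\<close>

definition Sn :: "nat \<Rightarrow> nat list set" where
  "Sn n = {w. length w = n \<and> distinct w \<and> set w = {1..n}}"

definition pe :: "nat list \<Rightarrow> nat \<Rightarrow> nat" where
  "pe w i = w ! (i - 1)"

definition contains_3241 :: "nat list \<Rightarrow> bool" where
  "contains_3241 w \<longleftrightarrow> (\<exists>i j. 1 \<le> i \<and> i + 2 \<le> j \<and> j \<le> length w - 1 \<and>
     pe w (j+1) < pe w (i+1) \<and> pe w (i+1) < pe w i \<and> pe w i < pe w j)"

definition contains_1423 :: "nat list \<Rightarrow> bool" where
  "contains_1423 w \<longleftrightarrow> (\<exists>i j. 1 \<le> i \<and> i + 2 \<le> j \<and> j \<le> length w - 1 \<and>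
     pe w i < pe w j \<and> pe w j < pe w (j+1) \<and> pe w (j+1) < pe w (i+1))"

definition contains_4132 :: "nat list \<Rightarrow> bool" where
  "contains_4132 w \<longleftrightarrow> (\<exists>i j. 1 \<le> i \<and> i + 2 \<le> j \<and> j \<le> length w - 1 \<and>
     pe w (i+1) < pe w (j+1) \<and> pe w (j+1) < pe w j \<and> pe w j < pe w i)"

definition contains_2314 :: "nat list \<Rightarrow> bool" where
  "contains_2314 w \<longleftrightarrow> (\<exists>i j. 1 \<le> i \<and> i + 2 \<le> j \<and> j \<le> length w - 1 \<and>
     pe w j < pe w i \<and> pe w i < pe w (i+1) \<and> pe w (i+1) < pe w (j+1))"

definition contains_231 :: "nat list \<Rightarrow> bool" where
  "contains_231 w \<longleftrightarrow> (\<exists>i. 1 \<le> i \<and> i + 1 \<le> length w - 1 \<and>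
     pe w (length w) < pe w i \<and> pe w i < pe w (i+1))"

definition contains_132 :: "nat list \<Rightarrow> bool" where
  "contains_132 w \<longleftrightarrow> (\<exists>j. 2 \<le> j \<and> j \<le> length w - 1 \<and>
     pe w 1 < pe w (j+1) \<and> pe w (j+1) < pe w j)"

definition An :: "nat \<Rightarrow> nat list set" where
  "An n = {w \<in> Sn n. \<not> contains_3241 w \<and> \<not> contains_1423 w \<and> \<not> contains_4132 w \<and>
      \<not> contains_2314 w \<and> \<not> contains_231 w \<and> \<not> contains_132 w}"

definition simple :: "nat list \<Rightarrow> bool" where
  "simple w \<longleftrightarrow> \<not> (\<exists>i j. 1 \<le> i \<and> i \<le> j \<and> j \<le> length w \<and>
      2 \<le> j - i + 1 \<and> j - i + 1 \<le> length w - 1 \<and>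
      (\<exists>a. pe w ` {i..j} = {a..<a + (j - i + 1)}))"

definition inflate :: "nat list \<Rightarrow> nat list \<Rightarrow> nat list" where
  "inflate \<pi> \<sigma> =
     map (\<lambda>x. x + length \<sigma> - 1) (takeWhile (\<lambda>x. x \<noteq> 1) \<pi>) @ \<sigma> @
     map (\<lambda>x. x + length \<sigma> - 1) (tl (dropWhile (\<lambda>x. x \<noteq> 1) \<pi>))"

end

theory Submission
  imports Defs
begin

(*
  A low block of w is a run of consecutive positions carrying exactly the values 1..k.  A
  permutation w is an inflation pi[sigma] with |sigma| = k exactly when it has a low block of size
  k: sigma is the block and pi is w with the block collapsed to a single entry 1.  Both pi and
  sigma inherit the avoidance of the six patterns, because an occurrence in either of them lifts
  to an occurrence in w; for 23-1 and 1-32 inside sigma the entry next to the block turns it into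
  23-14 or 41-32.

  If w in A_n is not simple, a proper interval of it yields a proper low block: the patterns force
  the interval to be monotone and the values below it to fill the positions next to it on the side
  of the entry 1 (up to reversal, which preserves A_n).  Collapsing the largest proper low block
  gives a simple pi, since an interval of pi would inflate to a larger low block of w.  Conversely,
  if collapsing a low block of size k gives a simple pi, a larger proper low block of w would
  collapse to an interval of pi, so k is the largest size.  This makes pi unique.
*)

lemma Sn_iff: "w \<in> Sn n \<longleftrightarrow> length w = n \<and> set w = {1..n}"
  by (auto simp: Sn_def intro: card_distinct)

lemma Sn_length: "w \<in> Sn n \<Longrightarrow> length w = n"
  by (simp add: Sn_def)

lemma pe_Sn_range: "w \<in> Sn n \<Longrightarrow> 1 \<le> i \<Longrightarrow> i \<le> n \<Longrightarrow> pe w i \<in> {1..n}"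
  by (metis One_nat_def Sn_iff Suc_le_eq diff_less less_le_trans nth_mem pe_def zero_less_one)

lemma pe_Sn_inj:
  assumes "w \<in> Sn n" "1 \<le> i" "i \<le> n" "1 \<le> j" "j \<le> n" "pe w i = pe w j"
  shows "i = j"
proof -
  have "distinct w" "length w = n" using assms(1) by (auto simp: Sn_def)
  then have "i - 1 = j - 1" using assms by (simp add: pe_def nth_eq_iff_index_eq)
  then show ?thesis using assms by simp
qed

lemma Sn_obtain_pos:
  assumes "w \<in> Sn n" "1 \<le> v" "v \<le> n"
  obtains t where "1 \<le> t" "t \<le> n" "pe w t = v"
proof -
  have "v \<in> set w" using assms by (auto simp: Sn_def)
  then obtain i where "i < n" "w ! i = v" using assms(1) by (auto simp: Sn_def in_set_conv_nth)
  then show ?thesis using that[of "i + 1"] by (simp add: pe_def)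
qed

lemma image_positions_below:
  assumes "w \<in> Sn n" "v \<le> n"
  shows "pe w ` {t \<in> {1..n}. pe w t \<le> v} = {1..v}"
proof
  show "pe w ` {t \<in> {1..n}. pe w t \<le> v} \<subseteq> {1..v}" using pe_Sn_range[OF assms(1)] by auto
  show "{1..v} \<subseteq> pe w ` {t \<in> {1..n}. pe w t \<le> v}"
  proof
    fix x assume "x \<in> {1..v}"
    then obtain t where "1 \<le> t" "t \<le> n" "pe w t = x"
      using Sn_obtain_pos[OF assms(1), of x] assms(2) by auto
    then show "x \<in> pe w ` {t \<in> {1..n}. pe w t \<le> v}" using \<open>x \<in> {1..v}\<close> by force
  qed
qed

lemma card_positions_below:
  assumes "w \<in> Sn n" "v \<le> n"
  shows "card {t \<in> {1..n}. pe w t \<le> v} = v"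
proof -
  have "inj_on (pe w) {t \<in> {1..n}. pe w t \<le> v}"
    unfolding inj_on_def using pe_Sn_inj[OF assms(1)] by auto
  then have "card {t \<in> {1..n}. pe w t \<le> v} = card {1..v}"
    by (metis card_image image_positions_below[OF assms])
  then show ?thesis by simp
qed

section \<open>Low blocks, deflation and inflation\<close>

definition low_block :: "nat list \<Rightarrow> nat \<Rightarrow> nat \<Rightarrow> bool" where
  "low_block w k P \<longleftrightarrow> 1 \<le> k \<and> 1 \<le> P \<and> P + k \<le> length w + 1 \<and>
     (\<forall>t. 1 \<le> t \<and> t \<le> length w \<longrightarrow> (pe w t \<le> k \<longleftrightarrow> P \<le> t \<and> t < P + k))"

lemma low_block_bounds: "low_block w k P \<Longrightarrow> 1 \<le> k \<and> 1 \<le> P \<and> P + k \<le> length w + 1"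
  by (simp add: low_block_def)

lemma low_block_iff:
  "low_block w k P \<Longrightarrow> 1 \<le> t \<Longrightarrow> t \<le> length w \<Longrightarrow> pe w t \<le> k \<longleftrightarrow> P \<le> t \<and> t < P + k"
  by (simp add: low_block_def)

lemma low_block_intro:
  assumes "w \<in> Sn n" "1 \<le> k" "k \<le> n" "{t \<in> {1..n}. pe w t \<le> k} = {P..Q}"
  shows "low_block w k P"
proof -
  have "card {P..Q} = k" using card_positions_below[OF assms(1,3)] assms(4) by simp
  then have Q: "Q + 1 = P + k" using assms(2) by simp
  then have "P \<in> {t \<in> {1..n}. pe w t \<le> k}" "Q \<in> {t \<in> {1..n}. pe w t \<le> k}"
    using assms(2,4) by auto
  then have "1 \<le> P" "Q \<le> n" by auto
  moreover have "pe w t \<le> k \<longleftrightarrow> P \<le> t \<and> t < P + k" if "1 \<le> t" "t \<le> n" for t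
  proof -
    have "t \<in> {t \<in> {1..n}. pe w t \<le> k} \<longleftrightarrow> t \<in> {P..Q}" using assms(4) by simp
    then show ?thesis using that Q by auto
  qed
  ultimately show ?thesis using assms Q by (simp add: low_block_def Sn_length)
qed

lemma low_block_unique:
  assumes b: "low_block w k P" and b': "low_block w k P'"
  shows "P = P'"
proof -
  have "P' \<le> P"
    using low_block_iff[OF b, of P] low_block_iff[OF b', of P] low_block_bounds[OF b] by auto
  moreover have "P \<le> P'"
    using low_block_iff[OF b, of P'] low_block_iff[OF b', of P'] low_block_bounds[OF b'] by auto
  ultimately show ?thesis by simp
qed

lemma low_block_not_simple:
  assumes w: "w \<in> Sn n" and b: "low_block w k P" and k: "2 \<le> k" "k \<le> n - 1"
  shows "\<not> simple w"
proof -
  have ln: "length w = n" using Sn_length[OF w] .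
  have L: "1 \<le> P" "P + k \<le> n + 1" using low_block_bounds[OF b] ln by auto
  have "t \<in> {t \<in> {1..n}. pe w t \<le> k} \<longleftrightarrow> t \<in> {P..P + k - 1}" for t
    using low_block_iff[OF b, of t] ln L k by auto
  then have "{t \<in> {1..n}. pe w t \<le> k} = {P..P + k - 1}" by blast
  then have "pe w ` {P..P + k - 1} = {1..<1 + (P + k - 1 - P + 1)}"
    using image_positions_below[OF w, of k] k by (simp add: atLeastLessThanSuc_atLeastAtMost)
  moreover have "1 \<le> P" "P \<le> P + k - 1" "P + k - 1 \<le> n" "2 \<le> P + k - 1 - P + 1"
    "P + k - 1 - P + 1 \<le> n - 1"
    using L k by auto
  ultimately show ?thesis unfolding simple_def ln by blast
qed

definition collapse :: "nat \<Rightarrow> nat \<Rightarrow> nat" where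
  "collapse k v = (if v \<le> k then 1 else v - (k - 1))"

definition deflate :: "nat list \<Rightarrow> nat \<Rightarrow> nat \<Rightarrow> nat list" where
  "deflate w k P = map (collapse k) (take (P - 1) w) @ 1 # map (collapse k) (drop (P + k - 1) w)"

definition block_of :: "nat list \<Rightarrow> nat \<Rightarrow> nat \<Rightarrow> nat list" where
  "block_of w k P = take k (drop (P - 1) w)"

definition collapse_pos :: "nat \<Rightarrow> nat \<Rightarrow> nat \<Rightarrow> nat" where
  "collapse_pos k P t = (if t < P then t else if t < P + k then P else t - (k - 1))"

definition expand_pos :: "nat \<Rightarrow> nat \<Rightarrow> nat \<Rightarrow> nat" where
  "expand_pos k P i = (if i < P then i else i + k - 1)"

lemma collapse_less_imp_less: "collapse k x < collapse k y \<Longrightarrow> x < y"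
  by (auto simp: collapse_def split: if_splits)

lemma collapse_le_iff: "1 \<le> k \<Longrightarrow> 1 \<le> k' \<Longrightarrow> collapse k v \<le> k' \<longleftrightarrow> v \<le> k' + k - 1"
  by (auto simp: collapse_def)

lemma collapse_image:
  assumes "1 \<le> k"
  shows "collapse k ` {k + 1..n} = {2..n - k + 1}"
proof
  show "collapse k ` {k + 1..n} \<subseteq> {2..n - k + 1}"
  proof
    fix y assume "y \<in> collapse k ` {k + 1..n}"
    then obtain x where "k + 1 \<le> x" "x \<le> n" "y = collapse k x" by auto
    then show "y \<in> {2..n - k + 1}" using assms by (auto simp: collapse_def)
  qed
  show "{2..n - k + 1} \<subseteq> collapse k ` {k + 1..n}"
  proof
    fix y assume "y \<in> {2..n - k + 1}"
    then have "y = collapse k (y + k - 1)" "y + k - 1 \<in> {k + 1..n}"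
      using assms by (auto simp: collapse_def)
    then show "y \<in> collapse k ` {k + 1..n}" by blast
  qed
qed

lemma collapse_pos_expand_pos:
  assumes "1 \<le> k"
  shows "collapse_pos k P (expand_pos k P i) = i" "collapse_pos k P (expand_pos k P i + 1) = i + 1"
  using assms by (auto simp: collapse_pos_def expand_pos_def)

lemma collapse_pos_first: "1 \<le> P \<Longrightarrow> collapse_pos k P 1 = 1"
  by (simp add: collapse_pos_def)

lemma collapse_pos_last:
  assumes "1 \<le> k" "1 \<le> P" "P + k \<le> n + 1"
  shows "collapse_pos k P n = n - k + 1"
proof (cases "n < P + k")
  case True
  then have "P = n - k + 1" using assms by linarith
  then show ?thesis using True assms by (simp add: collapse_pos_def)
qed (use assms in \<open>simp add: collapse_pos_def\<close>)

lemma expand_pos_gap: "1 \<le> k \<Longrightarrow> i + 2 \<le> j \<Longrightarrow> expand_pos k P i + 2 \<le> expand_pos k P j"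
  by (auto simp: expand_pos_def)

lemma low_block_split:
  assumes "1 \<le> P"
  shows "w = take (P - 1) w @ block_of w k P @ drop (P + k - 1) w"
proof -
  have "drop (P + k - 1) w = drop k (drop (P - 1) w)" using assms by (simp add: add.commute)
  then have "block_of w k P @ drop (P + k - 1) w = drop (P - 1) w"
    unfolding block_of_def using append_take_drop_id[of k "drop (P - 1) w"] by simp
  then show ?thesis by simp
qed

lemma in_set_take_drop_pe:
  assumes "x \<in> set (take k (drop N w))"
  shows "\<exists>t. N < t \<and> t \<le> N + k \<and> t \<le> length w \<and> x = pe w t"
proof -
  obtain i where "i < k" "N + i < length w" "x = w ! (N + i)"
    using assms by (auto simp: in_set_conv_nth)
  then show ?thesis by (intro exI[of _ "N + i + 1"]) (simp add: pe_def)
qed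

lemma low_block_outside:
  assumes "low_block w k P" "x \<in> set (take (P - 1) w) \<union> set (drop (P + k - 1) w)"
  shows "k < x"
proof -
  have b: "1 \<le> P" "1 \<le> k" using low_block_bounds[OF assms(1)] by auto
  have "x \<in> set (take (P - 1) (drop 0 w)) \<or> x \<in> set (take (length w) (drop (P + k - 1) w))"
    using assms(2) by simp
  then obtain t where "1 \<le> t" "t \<le> length w" "t < P \<or> P + k \<le> t" "x = pe w t"
  proof
    assume "x \<in> set (take (P - 1) (drop 0 w))"
    then obtain t where "0 < t" "t \<le> P - 1" "t \<le> length w" "x = pe w t"
      using in_set_take_drop_pe[of x "P - 1" 0 w] by auto
    then show thesis by (intro that[of t]) (use b in auto)
  next
    assume "x \<in> set (take (length w) (drop (P + k - 1) w))"
    then obtain t where "P + k - 1 < t" "t \<le> length w" "x = pe w t"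
      using in_set_take_drop_pe[of x "length w" "P + k - 1" w] by auto
    then show thesis by (intro that[of t]) (use b in auto)
  qed
  then show ?thesis using low_block_iff[OF assms(1), of t] by auto
qed

lemma low_block_inside:
  assumes "low_block w k P" "x \<in> set (block_of w k P)"
  shows "x \<le> k"
proof -
  obtain t where "P - 1 < t" "t \<le> P - 1 + k" "t \<le> length w" "x = pe w t"
    using assms(2) in_set_take_drop_pe[of x k "P - 1" w] unfolding block_of_def by auto
  then show ?thesis using low_block_iff[OF assms(1), of t] low_block_bounds[OF assms(1)] by auto
qed

lemma length_deflate: "low_block w k P \<Longrightarrow> length (deflate w k P) = length w - k + 1"
  by (auto simp: deflate_def dest: low_block_bounds)

lemma pe_deflate:
  assumes b: "low_block w k P" and t: "1 \<le> t" "t \<le> length w"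
  shows "pe (deflate w k P) (collapse_pos k P t) = collapse k (pe w t)"
proof -
  have L: "1 \<le> k" "1 \<le> P" "P + k \<le> length w + 1" using low_block_bounds[OF b] by auto
  let ?A = "map (collapse k) (take (P - 1) w)" and ?C = "map (collapse k) (drop (P + k - 1) w)"
  have lA: "length ?A = P - 1" using L by simp
  consider "t < P" | "P \<le> t" "t < P + k" | "P + k \<le> t" by linarith
  then show ?thesis
  proof cases
    case 1
    then have "t - 1 < length ?A" using t lA by simp
    then show ?thesis using 1 by (simp add: pe_def deflate_def collapse_pos_def nth_append)
  next
    case 2
    then have "collapse k (pe w t) = 1" using low_block_iff[OF b t] by (simp add: collapse_def)
    then show ?thesis using 2 lA by (simp add: pe_def deflate_def collapse_pos_def nth_append)
  next
    case 3
    have "collapse_pos k P t - 1 = length ?A + Suc (t - P - k)"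
      using 3 L by (simp add: collapse_pos_def)
    then have "pe (deflate w k P) (collapse_pos k P t) = (?A @ 1 # ?C) ! (length ?A + Suc (t - P - k))"
      by (simp only: pe_def deflate_def)
    also have "\<dots> = ?C ! (t - P - k)" by (simp only: nth_append_length_plus nth_Cons_Suc)
    also have "\<dots> = collapse k (w ! (P + k - 1 + (t - P - k)))" using 3 L t by simp
    also have "P + k - 1 + (t - P - k) = t - 1" using 3 L by simp
    finally show ?thesis by (simp add: pe_def)
  qed
qed

lemma pe_deflate_expand:
  assumes b: "low_block w k P" and i: "1 \<le> i" "i \<le> length w - k + 1"
  shows "pe (deflate w k P) i = collapse k (pe w (expand_pos k P i))"
    and "1 \<le> expand_pos k P i" "expand_pos k P i \<le> length w"
proof -
  have L: "1 \<le> k" "1 \<le> P" "P + k \<le> length w + 1" using low_block_bounds[OF b] by auto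
  show r: "1 \<le> expand_pos k P i" "expand_pos k P i \<le> length w"
    using L i by (auto simp: expand_pos_def)
  show "pe (deflate w k P) i = collapse k (pe w (expand_pos k P i))"
    using pe_deflate[OF b r] collapse_pos_expand_pos[OF L(1)] by simp
qed

lemma pe_deflate_expand_Suc:
  assumes b: "low_block w k P" and i: "1 \<le> i" "i + 1 \<le> length w - k + 1"
  shows "expand_pos k P i + 1 \<le> length w"
    and "pe (deflate w k P) (i + 1) = collapse k (pe w (expand_pos k P i + 1))"
proof -
  have L: "1 \<le> k" "1 \<le> P" "P + k \<le> length w + 1" using low_block_bounds[OF b] by auto
  show r: "expand_pos k P i + 1 \<le> length w" using L i by (auto simp: expand_pos_def)
  show "pe (deflate w k P) (i + 1) = collapse k (pe w (expand_pos k P i + 1))"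
    using pe_deflate[OF b, of "expand_pos k P i + 1"] r collapse_pos_expand_pos[OF L(1)] by simp
qed

lemma length_block_of:
  assumes "low_block w k P"
  shows "length (block_of w k P) = k"
proof -
  have "k \<le> length w - (P - 1)" using low_block_bounds[OF assms] by linarith
  then show ?thesis by (simp add: block_of_def)
qed

lemma pe_block_of:
  assumes "low_block w k P" "1 \<le> s" "s \<le> k"
  shows "pe (block_of w k P) s = pe w (P - 1 + s)"
proof -
  have "P - 1 \<le> length w" "P - 1 + s - 1 = P - 1 + (s - 1)"
    using assms(2) low_block_bounds[OF assms(1)] by auto
  then show ?thesis using assms(2,3) by (simp add: pe_def block_of_def)
qed

lemma low_block_values:
  assumes "w \<in> Sn n" "low_block w k P"
  shows "set (block_of w k P) = {1..k}"
    and "set (take (P - 1) w) \<union> set (drop (P + k - 1) w) = {k + 1..n}"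
proof -
  have L: "1 \<le> P" using low_block_bounds[OF assms(2)] by simp
  have w: "set w = {1..n}" using assms(1) by (simp add: Sn_iff)
  have parts: "set w = set (take (P - 1) w) \<union> set (block_of w k P) \<union> set (drop (P + k - 1) w)"
    using arg_cong[OF low_block_split[OF L, of w k], of set] by auto
  have k: "k \<le> n" using low_block_bounds[OF assms(2)] Sn_length[OF assms(1)] by simp
  show "set (block_of w k P) = {1..k}"
  proof
    show "set (block_of w k P) \<subseteq> {1..k}"
      using parts w low_block_inside[OF assms(2)] by auto
    show "{1..k} \<subseteq> set (block_of w k P)"
    proof
      fix x assume x: "x \<in> {1..k}"
      then have "x \<in> set w" using w k by auto
      then show "x \<in> set (block_of w k P)"
        using parts low_block_outside[OF assms(2), of x] x by auto
    qed
  qed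
  show "set (take (P - 1) w) \<union> set (drop (P + k - 1) w) = {k + 1..n}"
  proof
    show "set (take (P - 1) w) \<union> set (drop (P + k - 1) w) \<subseteq> {k + 1..n}"
      using parts w low_block_outside[OF assms(2)] by (auto simp: Suc_le_eq)
    show "{k + 1..n} \<subseteq> set (take (P - 1) w) \<union> set (drop (P + k - 1) w)"
    proof
      fix x assume x: "x \<in> {k + 1..n}"
      then have "x \<in> set w" using w by auto
      then show "x \<in> set (take (P - 1) w) \<union> set (drop (P + k - 1) w)"
        using parts low_block_inside[OF assms(2), of x] x by auto
    qed
  qed
qed

lemma block_of_Sn:
  assumes "w \<in> Sn n" "low_block w k P"
  shows "block_of w k P \<in> Sn k"
proof -
  show ?thesis using low_block_values(1)[OF assms] length_block_of[OF assms(2)] by (simp add: Sn_iff)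
qed

lemma deflate_Sn:
  assumes "w \<in> Sn n" "low_block w k P"
  shows "deflate w k P \<in> Sn (n - k + 1)"
proof -
  have "set (deflate w k P) = insert 1 (collapse k ` {k + 1..n})"
    using low_block_values(2)[OF assms] by (auto simp: deflate_def)
  also have "\<dots> = {1..n - k + 1}"
    using collapse_image low_block_bounds[OF assms(2)] by auto
  finally show ?thesis
    using length_deflate[OF assms(2)] assms(1) by (simp add: Sn_iff)
qed

lemma inflate_split:
  assumes "1 \<notin> set A"
  shows "inflate (A @ 1 # C) \<sigma> = map (\<lambda>x. x + length \<sigma> - 1) A @ \<sigma> @ map (\<lambda>x. x + length \<sigma> - 1) C"
proof -
  have "\<And>x. x \<in> set A \<Longrightarrow> x \<noteq> 1" using assms by auto
  then show ?thesis by (simp add: inflate_def)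
qed

lemma map_uncollapse:
  "1 \<le> k \<Longrightarrow> \<forall>x\<in>set xs. k < x \<Longrightarrow> map (\<lambda>x. x + k - 1) (map (collapse k) xs) = xs"
  by (induction xs) (auto simp: collapse_def)

lemma map_collapse_shift:
  "1 \<le> k \<Longrightarrow> \<forall>x\<in>set xs. 2 \<le> x \<Longrightarrow> map (collapse k) (map (\<lambda>x. x + k - 1) xs) = xs"
  by (induction xs) (auto simp: collapse_def)

lemma inflate_deflate:
  assumes b: "low_block w k P"
  shows "inflate (deflate w k P) (block_of w k P) = w"
proof -
  have L: "1 \<le> k" "1 \<le> P" "P + k \<le> length w + 1" using low_block_bounds[OF b] by auto
  let ?A = "take (P - 1) w" and ?C = "drop (P + k - 1) w"
  have bigA: "\<forall>x\<in>set ?A. k < x" and bigC: "\<forall>x\<in>set ?C. k < x"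
    using low_block_outside[OF b] by auto
  then have no1: "1 \<notin> set (map (collapse k) ?A)" using L(1) by (auto simp: collapse_def)
  note lB = length_block_of[OF b]
  have "inflate (deflate w k P) (block_of w k P) =
      map (\<lambda>x. x + k - 1) (map (collapse k) ?A) @ block_of w k P @ map (\<lambda>x. x + k - 1) (map (collapse k) ?C)"
    unfolding deflate_def inflate_split[OF no1] lB ..
  also have "\<dots> = ?A @ block_of w k P @ ?C"
    by (simp only: map_uncollapse[OF L(1) bigA] map_uncollapse[OF L(1) bigC])
  also have "\<dots> = w" using low_block_split[OF L(2)] by simp
  finally show ?thesis .
qed

lemma low_block_append:
  assumes "1 \<le> length B" "\<forall>x\<in>set B. x \<le> length B" "\<forall>x\<in>set A \<union> set C. length B < x"
  shows "low_block (A @ B @ C) (length B) (length A + 1)"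
  unfolding low_block_def
proof (intro conjI allI impI)
  fix t assume t: "1 \<le> t \<and> t \<le> length (A @ B @ C)"
  show "pe (A @ B @ C) t \<le> length B \<longleftrightarrow> length A + 1 \<le> t \<and> t < length A + 1 + length B"
  proof (cases "t - 1 < length A")
    case True
    moreover have "length B < A ! (t - 1)" using True assms(3) by simp
    ultimately have "\<not> pe (A @ B @ C) t \<le> length B" by (simp add: pe_def nth_append)
    then show ?thesis using True t by auto
  next
    case False
    show ?thesis
    proof (cases "t - 1 - length A < length B")
      case True
      have "pe (A @ B @ C) t = B ! (t - 1 - length A)" using False True by (simp add: pe_def nth_append)
      moreover have "B ! (t - 1 - length A) \<le> length B" using assms(2) nth_mem[OF True] by blast
      ultimately show ?thesis using False True t by auto
    next
      case outer: False
      then have i: "t - 1 - length A - length B < length C" using False t by auto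
      have "pe (A @ B @ C) t = C ! (t - 1 - length A - length B)"
        using False outer by (simp add: pe_def nth_append)
      moreover have "length B < C ! (t - 1 - length A - length B)" using assms(3) nth_mem[OF i] by blast
      ultimately show ?thesis using False outer by auto
    qed
  qed
qed (use assms(1) in auto)

lemma deflate_inflate:
  assumes \<pi>: "\<pi> \<in> Sn m" and \<sigma>: "\<sigma> \<in> Sn k" and "1 \<le> m" "1 \<le> k"
  shows "\<exists>P. low_block (inflate \<pi> \<sigma>) k P \<and> deflate (inflate \<pi> \<sigma>) k P = \<pi>"
proof -
  have "1 \<in> set \<pi>" using \<pi> \<open>1 \<le> m\<close> by (simp add: Sn_iff)
  then obtain A C where \<pi>_split: "\<pi> = A @ 1 # C" "1 \<notin> set A" by (metis split_list_first)
  have "distinct \<pi>" "set \<pi> = {1..m}" using \<pi> by (auto simp: Sn_def)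
  then have "1 \<notin> set C" "set A \<union> set C \<subseteq> {1..m}" using \<pi>_split by auto
  then have geA: "\<forall>x\<in>set A. 2 \<le> x" and geC: "\<forall>x\<in>set C. 2 \<le> x"
    using \<pi>_split(2) by (metis Suc_1 UnI1 UnI2 atLeastAtMost_iff not_less_eq_eq le_antisym subsetD)+
  have \<sigma>_vals: "\<forall>x\<in>set \<sigma>. x \<le> length \<sigma>" "length \<sigma> = k" using \<sigma> by (auto simp: Sn_iff)
  let ?f = "\<lambda>x. x + k - 1"
  have infl: "inflate \<pi> \<sigma> = map ?f A @ \<sigma> @ map ?f C"
    using inflate_split[OF \<pi>_split(2)] \<pi>_split(1) \<sigma>_vals(2) by simp
  have "\<forall>x\<in>set (map ?f A) \<union> set (map ?f C). length \<sigma> < x" using geA geC \<sigma>_vals(2) by auto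
  then have "low_block (map ?f A @ \<sigma> @ map ?f C) k (length A + 1)"
    using low_block_append[of \<sigma> "map ?f A" "map ?f C"] \<sigma>_vals assms(4) by simp
  moreover have "map (collapse k) (map ?f A) = A" "map (collapse k) (map ?f C) = C"
    using map_collapse_shift[OF assms(4)] geA geC by auto
  then have "deflate (map ?f A @ \<sigma> @ map ?f C) k (length A + 1) = \<pi>"
    using \<sigma>_vals(2) \<pi>_split(1) by (simp add: deflate_def)
  ultimately show ?thesis unfolding infl by blast
qed

lemma low_block_compose:
  assumes b: "low_block w k P" and b': "low_block (deflate w k P) k' P'"
  shows "low_block w (k' + k - 1) P'"
proof -
  have L: "1 \<le> k" "1 \<le> P" "P + k \<le> length w + 1" using low_block_bounds[OF b] by auto
  have L': "1 \<le> k'" "1 \<le> P'" "P' + k' \<le> length w - k + 2"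
    using low_block_bounds[OF b'] length_deflate[OF b] L by auto
  have "pe (deflate w k P) P = 1"
    using pe_deflate[OF b, of P] low_block_iff[OF b, of P] L by (simp add: collapse_pos_def collapse_def)
  then have PP: "P' \<le> P" "P < P' + k'"
    using low_block_iff[OF b', of P] length_deflate[OF b] L L' by auto
  show ?thesis unfolding low_block_def
  proof (intro conjI allI impI)
    fix t assume t: "1 \<le> t \<and> t \<le> length w"
    have c: "1 \<le> collapse_pos k P t" "collapse_pos k P t \<le> length (deflate w k P)"
      using t L length_deflate[OF b] by (auto simp: collapse_pos_def)
    have "pe w t \<le> k' + k - 1 \<longleftrightarrow> pe (deflate w k P) (collapse_pos k P t) \<le> k'"
      using pe_deflate[OF b] t collapse_le_iff[OF L(1) L'(1)] by simp
    also have "\<dots> \<longleftrightarrow> P' \<le> collapse_pos k P t \<and> collapse_pos k P t < P' + k'"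
      using low_block_iff[OF b' c] .
    also have "\<dots> \<longleftrightarrow> P' \<le> t \<and> t < P' + (k' + k - 1)"
      using PP L L' by (auto simp: collapse_pos_def)
    finally show "pe w t \<le> k' + k - 1 \<longleftrightarrow> P' \<le> t \<and> t < P' + (k' + k - 1)" .
  qed (use L L' in auto)
qed

lemma low_block_deflate:
  assumes b: "low_block w k P" and b': "low_block w k' P'" and "k \<le> k'"
  shows "low_block (deflate w k P) (k' - k + 1) P'"
proof -
  have L: "1 \<le> k" "1 \<le> P" "P + k \<le> length w + 1" using low_block_bounds[OF b] by auto
  have L': "1 \<le> k'" "1 \<le> P'" "P' + k' \<le> length w + 1" using low_block_bounds[OF b'] by auto
  have ends: "1 \<le> P + k - 1" "P + k - 1 \<le> length w" using L by auto
  have "pe w P \<le> k'" "pe w (P + k - 1) \<le> k'"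
    using low_block_iff[OF b, of P] low_block_iff[OF b ends] L assms(3) by auto
  then have PP: "P' \<le> P" "P + k \<le> P' + k'"
    using low_block_iff[OF b', of P] low_block_iff[OF b' ends] L by auto
  show ?thesis unfolding low_block_def length_deflate[OF b]
  proof (intro conjI allI impI)
    fix i assume i: "1 \<le> i \<and> i \<le> length w - k + 1"
    note e = pe_deflate_expand[OF b, of i]
    have "pe (deflate w k P) i \<le> k' - k + 1 \<longleftrightarrow> pe w (expand_pos k P i) \<le> k'"
      using e i collapse_le_iff[OF L(1), of "k' - k + 1"] assms(3) by simp
    also have "\<dots> \<longleftrightarrow> P' \<le> expand_pos k P i \<and> expand_pos k P i < P' + k'"
      using low_block_iff[OF b'] e(2,3) i by simp
    also have "\<dots> \<longleftrightarrow> P' \<le> i \<and> i < P' + (k' - k + 1)"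
      using PP L assms(3) by (auto simp: expand_pos_def)
    finally show "pe (deflate w k P) i \<le> k' - k + 1 \<longleftrightarrow> P' \<le> i \<and> i < P' + (k' - k + 1)" .
  qed (use L L' PP assms(3) in auto)
qed

section \<open>Deflation and blocks preserve pattern avoidance\<close>

definition has_pair_pattern :: "(nat \<Rightarrow> nat \<Rightarrow> nat \<Rightarrow> nat \<Rightarrow> bool) \<Rightarrow> nat list \<Rightarrow> bool" where
  "has_pair_pattern R w \<longleftrightarrow> (\<exists>i j. 1 \<le> i \<and> i + 2 \<le> j \<and> j \<le> length w - 1 \<and>
     R (pe w i) (pe w (i + 1)) (pe w j) (pe w (j + 1)))"

lemma contains_pair_pattern_iff:
  "contains_3241 w \<longleftrightarrow> has_pair_pattern (\<lambda>a b c d. d < b \<and> b < a \<and> a < c) w"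
  "contains_1423 w \<longleftrightarrow> has_pair_pattern (\<lambda>a b c d. a < c \<and> c < d \<and> d < b) w"
  "contains_4132 w \<longleftrightarrow> has_pair_pattern (\<lambda>a b c d. b < d \<and> d < c \<and> c < a) w"
  "contains_2314 w \<longleftrightarrow> has_pair_pattern (\<lambda>a b c d. c < a \<and> a < b \<and> b < d) w"
  by (simp_all add: has_pair_pattern_def contains_3241_def contains_1423_def contains_4132_def
      contains_2314_def)

lemma has_pair_pattern_pullback:
  assumes "has_pair_pattern R v"
    and lift: "\<And>i. 1 \<le> i \<Longrightarrow> i + 1 \<le> length v \<Longrightarrow> 1 \<le> f i \<and> f i + 1 \<le> length w \<and>
               pe v i = g (pe w (f i)) \<and> pe v (i + 1) = g (pe w (f i + 1))"
    and gap: "\<And>i j. i + 2 \<le> j \<Longrightarrow> f i + 2 \<le> f j"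
    and reflect: "\<And>a b c d. R (g a) (g b) (g c) (g d) \<Longrightarrow> R a b c d"
  shows "has_pair_pattern R w"
proof -
  obtain i j where ij: "1 \<le> i" "i + 2 \<le> j" "j \<le> length v - 1"
    and R: "R (pe v i) (pe v (i + 1)) (pe v j) (pe v (j + 1))"
    using assms(1) by (auto simp: has_pair_pattern_def)
  have li: "1 \<le> f i \<and> f i + 1 \<le> length w \<and> pe v i = g (pe w (f i)) \<and> pe v (i + 1) = g (pe w (f i + 1))"
    by (rule lift) (use ij in auto)
  have lj: "1 \<le> f j \<and> f j + 1 \<le> length w \<and> pe v j = g (pe w (f j)) \<and> pe v (j + 1) = g (pe w (f j + 1))"
    by (rule lift) (use ij in auto)
  show ?thesis unfolding has_pair_pattern_def
    using ij li lj gap[OF ij(2)] reflect R by (intro exI[of _ "f i"] exI[of _ "f j"]) auto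
qed

lemma deflate_pair_pattern:
  assumes b: "low_block w k P" and "has_pair_pattern R (deflate w k P)"
    and "\<And>a b c d. R (collapse k a) (collapse k b) (collapse k c) (collapse k d) \<Longrightarrow> R a b c d"
  shows "has_pair_pattern R w"
proof (rule has_pair_pattern_pullback[where f = "expand_pos k P" and g = "collapse k", OF assms(2)])
  fix i assume "1 \<le> i" "i + 1 \<le> length (deflate w k P)"
  then show "1 \<le> expand_pos k P i \<and> expand_pos k P i + 1 \<le> length w \<and>
      pe (deflate w k P) i = collapse k (pe w (expand_pos k P i)) \<and>
      pe (deflate w k P) (i + 1) = collapse k (pe w (expand_pos k P i + 1))"
    using pe_deflate_expand[OF b, of i] pe_deflate_expand_Suc[OF b, of i] length_deflate[OF b] by simp
next
  show "expand_pos k P i + 2 \<le> expand_pos k P j" if "i + 2 \<le> j" for i j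
    using expand_pos_gap[OF _ that] low_block_bounds[OF b] by simp
qed (rule assms(3))

lemma block_pair_pattern:
  assumes b: "low_block w k P" and "has_pair_pattern R (block_of w k P)"
  shows "has_pair_pattern R w"
proof (rule has_pair_pattern_pullback[where f = "\<lambda>i. P - 1 + i" and g = id, OF assms(2)])
  fix i assume i: "1 \<le> i" "i + 1 \<le> length (block_of w k P)"
  then have "i + 1 \<le> k" "P - 1 + i + 1 \<le> length w"
    using length_block_of[OF b] low_block_bounds[OF b] by auto
  then show "1 \<le> P - 1 + i \<and> P - 1 + i + 1 \<le> length w \<and>
      pe (block_of w k P) i = id (pe w (P - 1 + i)) \<and> pe (block_of w k P) (i + 1) = id (pe w (P - 1 + i + 1))"
    using pe_block_of[OF b, of i] pe_block_of[OF b, of "i + 1"] i by simp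
qed auto

lemma deflate_contains_231:
  assumes b: "low_block w k P" and "contains_231 (deflate w k P)"
  shows "contains_231 w"
proof -
  let ?n = "length w" and ?\<pi> = "deflate w k P"
  have L: "1 \<le> k" "1 \<le> P" "P + k \<le> ?n + 1" using low_block_bounds[OF b] by auto
  obtain i where i: "1 \<le> i" "i + 1 \<le> ?n - k"
    and v: "pe ?\<pi> (?n - k + 1) < pe ?\<pi> i" "pe ?\<pi> i < pe ?\<pi> (i + 1)"
    using assms(2) length_deflate[OF b] unfolding contains_231_def by auto
  have "pe ?\<pi> (?n - k + 1) = collapse k (pe w ?n)"
    using pe_deflate[OF b, of ?n] collapse_pos_last[OF L] L by simp
  moreover have "expand_pos k P i + 1 \<le> ?n - 1" using i L by (auto simp: expand_pos_def)
  ultimately show ?thesis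
    unfolding contains_231_def
    using i v pe_deflate_expand[OF b, of i] pe_deflate_expand_Suc[OF b, of i] collapse_less_imp_less
    by (intro exI[of _ "expand_pos k P i"]) auto
qed

lemma deflate_contains_132:
  assumes b: "low_block w k P" and "contains_132 (deflate w k P)"
  shows "contains_132 w"
proof -
  let ?n = "length w" and ?\<pi> = "deflate w k P"
  have L: "1 \<le> k" "1 \<le> P" "P + k \<le> ?n + 1" using low_block_bounds[OF b] by auto
  obtain j where j: "2 \<le> j" "j \<le> ?n - k"
    and v: "pe ?\<pi> 1 < pe ?\<pi> (j + 1)" "pe ?\<pi> (j + 1) < pe ?\<pi> j"
    using assms(2) length_deflate[OF b] unfolding contains_132_def by auto
  have "pe ?\<pi> 1 = collapse k (pe w 1)"
    using pe_deflate[OF b, of 1] collapse_pos_first[OF L(2)] L by simp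
  moreover have "2 \<le> expand_pos k P j" using j L by (auto simp: expand_pos_def)
  ultimately show ?thesis
    unfolding contains_132_def
    using j v pe_deflate_expand[OF b, of j] pe_deflate_expand_Suc[OF b, of j] collapse_less_imp_less
    by (intro exI[of _ "expand_pos k P j"]) auto
qed

lemma deflate_An:
  assumes w: "w \<in> An n" and b: "low_block w k P"
  shows "deflate w k P \<in> An (n - k + 1)"
proof -
  have lift: "has_pair_pattern R w" if "has_pair_pattern R (deflate w k P)"
    and "\<And>a b c d. R (collapse k a) (collapse k b) (collapse k c) (collapse k d) \<Longrightarrow> R a b c d" for R
    using deflate_pair_pattern[OF b] that by blast
  note reflect = collapse_less_imp_less[of k]
  have "\<not> contains_3241 (deflate w k P)" "\<not> contains_1423 (deflate w k P)"
    "\<not> contains_4132 (deflate w k P)" "\<not> contains_2314 (deflate w k P)"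
    using w unfolding An_def contains_pair_pattern_iff by (blast intro: lift dest: reflect)+
  moreover have "\<not> contains_231 (deflate w k P)" "\<not> contains_132 (deflate w k P)"
    using w deflate_contains_231[OF b] deflate_contains_132[OF b] by (auto simp: An_def)
  moreover have "deflate w k P \<in> Sn (n - k + 1)" using w deflate_Sn[of w n k P] b by (simp add: An_def)
  ultimately show ?thesis by (simp add: An_def)
qed

lemma block_of_contains_231:
  assumes b: "low_block w k P" and "contains_231 (block_of w k P)"
  shows "contains_231 w \<or> contains_2314 w"
proof -
  let ?n = "length w" and ?\<sigma> = "block_of w k P"
  have L: "1 \<le> k" "1 \<le> P" "P + k \<le> ?n + 1" using low_block_bounds[OF b] by auto
  have pe\<sigma>: "pe ?\<sigma> s = pe w (P - 1 + s)" if "1 \<le> s" "s \<le> k" for s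
    using pe_block_of[OF b that] .
  obtain i where i: "1 \<le> i" "i + 1 \<le> k - 1"
    and v: "pe ?\<sigma> k < pe ?\<sigma> i" "pe ?\<sigma> i < pe ?\<sigma> (i + 1)"
    using assms(2) length_block_of[OF b] unfolding contains_231_def by auto
  let ?i = "P - 1 + i" and ?e = "P + k - 1"
  have v': "pe w ?e < pe w ?i" "pe w ?i < pe w (?i + 1)"
    using v pe\<sigma>[of k] pe\<sigma>[of i] pe\<sigma>[of "i + 1"] i L by (simp_all add: add.commute)
  show ?thesis
  proof (cases "?e = ?n")
    case True
    then have "contains_231 w" unfolding contains_231_def using i v' L by (intro exI[of _ ?i]) auto
    then show ?thesis ..
  next
    case False
    then have "?e + 1 \<le> ?n" using L by linarith
    then have "k < pe w (?e + 1)" using low_block_iff[OF b, of "?e + 1"] L by auto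
    moreover have "pe w (?i + 1) \<le> k" using low_block_iff[OF b, of "?i + 1"] i L by auto
    ultimately have "contains_2314 w"
      unfolding contains_2314_def using i v' L False by (intro exI[of _ ?i] exI[of _ ?e]) auto
    then show ?thesis ..
  qed
qed

lemma block_of_contains_132:
  assumes b: "low_block w k P" and "contains_132 (block_of w k P)"
  shows "contains_132 w \<or> contains_4132 w"
proof -
  let ?n = "length w" and ?\<sigma> = "block_of w k P"
  have L: "1 \<le> k" "1 \<le> P" "P + k \<le> ?n + 1" using low_block_bounds[OF b] by auto
  have pe\<sigma>: "pe ?\<sigma> s = pe w (P - 1 + s)" if "1 \<le> s" "s \<le> k" for s
    using pe_block_of[OF b that] .
  obtain j where j: "2 \<le> j" "j \<le> k - 1"
    and v: "pe ?\<sigma> 1 < pe ?\<sigma> (j + 1)" "pe ?\<sigma> (j + 1) < pe ?\<sigma> j"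
    using assms(2) length_block_of[OF b] unfolding contains_132_def by auto
  let ?j = "P - 1 + j"
  have v': "pe w P < pe w (?j + 1)" "pe w (?j + 1) < pe w ?j"
    using v pe\<sigma>[of 1] pe\<sigma>[of j] pe\<sigma>[of "j + 1"] j L by simp_all
  show ?thesis
  proof (cases "P = 1")
    case True
    then have "contains_132 w" unfolding contains_132_def using j v' L by (intro exI[of _ ?j]) auto
    then show ?thesis ..
  next
    case False
    then have "1 \<le> P - 1" "P - 1 \<le> ?n" using L by linarith+
    then have "k < pe w (P - 1)" using low_block_iff[OF b, of "P - 1"] by auto
    moreover have "pe w ?j \<le> k" using low_block_iff[OF b, of ?j] j L by auto
    ultimately have "contains_4132 w"
      unfolding contains_4132_def using j v' L False by (intro exI[of _ "P - 1"] exI[of _ ?j]) auto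
    then show ?thesis ..
  qed
qed

lemma block_of_An:
  assumes w: "w \<in> An n" and b: "low_block w k P"
  shows "block_of w k P \<in> An k"
proof -
  have "\<not> contains_3241 (block_of w k P)" "\<not> contains_1423 (block_of w k P)"
    "\<not> contains_4132 (block_of w k P)" "\<not> contains_2314 (block_of w k P)"
    using block_pair_pattern[OF b] w by (auto simp: An_def contains_pair_pattern_iff)
  moreover have "\<not> contains_231 (block_of w k P)" "\<not> contains_132 (block_of w k P)"
    using w block_of_contains_231[OF b] block_of_contains_132[OF b] by (auto simp: An_def)
  moreover have "block_of w k P \<in> Sn k" using w block_of_Sn[of w n k P] b by (simp add: An_def)
  ultimately show ?thesis by (simp add: An_def)
qed

section \<open>Reversal\<close>

lemma pe_rev: "1 \<le> i \<Longrightarrow> i \<le> length w \<Longrightarrow> pe (rev w) i = pe w (length w + 1 - i)"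
  by (simp add: pe_def rev_nth)

lemma pe_rev_mirror: "1 \<le> t \<Longrightarrow> t \<le> length w \<Longrightarrow> pe (rev w) (length w + 1 - t) = pe w t"
proof -
  assume t: "1 \<le> t" "t \<le> length w"
  have "length w + 1 - (length w + 1 - t) = t" using t by simp
  moreover have "1 \<le> length w + 1 - t" "length w + 1 - t \<le> length w" using t by auto
  ultimately show ?thesis using pe_rev[of "length w + 1 - t" w] by simp
qed

lemma has_pair_pattern_rev:
  assumes "has_pair_pattern R (rev w)"
  shows "has_pair_pattern (\<lambda>a b c d. R d c b a) w"
proof -
  let ?n = "length w"
  obtain i j where ij: "1 \<le> i" "i + 2 \<le> j" "j \<le> ?n - 1"
    and R: "R (pe (rev w) i) (pe (rev w) (i + 1)) (pe (rev w) j) (pe (rev w) (j + 1))"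
    using assms by (auto simp: has_pair_pattern_def)
  have "pe (rev w) i = pe w (?n - i + 1)" "pe (rev w) (i + 1) = pe w (?n - i)"
    "pe (rev w) j = pe w (?n - j + 1)" "pe (rev w) (j + 1) = pe w (?n - j)"
    using ij by (simp_all add: pe_rev Suc_diff_le)
  then show ?thesis unfolding has_pair_pattern_def
    using ij R by (intro exI[of _ "?n - j"] exI[of _ "?n - i"]) auto
qed

lemma contains_231_rev: "contains_231 (rev w) \<Longrightarrow> contains_132 w"
proof -
  let ?n = "length w"
  assume "contains_231 (rev w)"
  then obtain i where i: "1 \<le> i" "i + 1 \<le> ?n - 1"
    and v: "pe (rev w) ?n < pe (rev w) i" "pe (rev w) i < pe (rev w) (i + 1)"
    unfolding contains_231_def by auto
  moreover have "i \<le> ?n" using i by linarith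
  ultimately have "pe w 1 < pe w (?n - i + 1) \<and> pe w (?n - i + 1) < pe w (?n - i)"
    by (simp add: pe_rev Suc_diff_le)
  then show "contains_132 w" unfolding contains_132_def using i by (intro exI[of _ "?n - i"]) auto
qed

lemma contains_132_rev: "contains_132 (rev w) \<Longrightarrow> contains_231 w"
proof -
  let ?n = "length w"
  assume "contains_132 (rev w)"
  then obtain j where j: "2 \<le> j" "j \<le> ?n - 1"
    and v: "pe (rev w) 1 < pe (rev w) (j + 1)" "pe (rev w) (j + 1) < pe (rev w) j"
    unfolding contains_132_def by auto
  moreover have "j \<le> ?n" using j by linarith
  ultimately have "pe w ?n < pe w (?n - j) \<and> pe w (?n - j) < pe w (?n - j + 1)"
    by (simp add: pe_rev Suc_diff_le)
  then show "contains_231 w" unfolding contains_231_def using j by (intro exI[of _ "?n - j"]) auto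
qed

lemma rev_An:
  assumes "w \<in> An n"
  shows "rev w \<in> An n"
proof -
  have no_pair: "\<not> has_pair_pattern R (rev w)" if "\<not> has_pair_pattern (\<lambda>a b c d. R d c b a) w" for R
    using has_pair_pattern_rev that by blast
  have "\<not> contains_3241 (rev w)"
    using no_pair[of "\<lambda>a b c d. d < b \<and> b < a \<and> a < c"] assms by (simp add: An_def contains_pair_pattern_iff)
  moreover have "\<not> contains_1423 (rev w)"
    using no_pair[of "\<lambda>a b c d. a < c \<and> c < d \<and> d < b"] assms by (simp add: An_def contains_pair_pattern_iff)
  moreover have "\<not> contains_4132 (rev w)"
    using no_pair[of "\<lambda>a b c d. b < d \<and> d < c \<and> c < a"] assms by (simp add: An_def contains_pair_pattern_iff)
  moreover have "\<not> contains_2314 (rev w)"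
    using no_pair[of "\<lambda>a b c d. c < a \<and> a < b \<and> b < d"] assms by (simp add: An_def contains_pair_pattern_iff)
  moreover have "\<not> contains_231 (rev w)" "\<not> contains_132 (rev w)"
    using assms contains_231_rev contains_132_rev by (auto simp: An_def)
  moreover have "rev w \<in> Sn n" using assms by (simp add: An_def Sn_iff)
  ultimately show ?thesis by (simp add: An_def)
qed

lemma low_block_rev:
  assumes b: "low_block (rev w) k P"
  shows "low_block w k (length w + 2 - P - k)"
proof -
  let ?n = "length w"
  have L: "1 \<le> k" "1 \<le> P" "P + k \<le> ?n + 1" using low_block_bounds[OF b] by auto
  show ?thesis unfolding low_block_def
  proof (intro conjI allI impI)
    fix t assume t: "1 \<le> t \<and> t \<le> ?n"
    have r: "1 \<le> ?n + 1 - t" "?n + 1 - t \<le> length (rev w)" using t by auto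
    have "pe w t = pe (rev w) (?n + 1 - t)" using pe_rev_mirror[of t w] t by simp
    then have "pe w t \<le> k \<longleftrightarrow> P \<le> ?n + 1 - t \<and> ?n + 1 - t < P + k"
      using low_block_iff[OF b r] by simp
    also have "\<dots> \<longleftrightarrow> ?n + 2 - P - k \<le> t \<and> t < ?n + 2 - P - k + k"
      using t L by linarith
    finally show "pe w t \<le> k \<longleftrightarrow> ?n + 2 - P - k \<le> t \<and> t < ?n + 2 - P - k + k" .
  qed (use L in auto)
qed

section \<open>A non-simple permutation of the class has a proper low block\<close>

text \<open>A descent inside the interval would force 1-32 or 41-32, so the interval increases.  Its
  first ascent then rules out, outside the interval, a value below \<open>a\<close> directly followed by
  one of at least \<open>c\<close> (14-23, 23-14), and any value below \<open>a\<close> to its right (23-1); hence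
  the values below \<open>a\<close> fill the positions just before \<open>p\<close>.\<close>

locale interval_right_of_one =
  fixes w :: "nat list" and n p q a c r :: nat
  assumes An: "w \<in> An n"
    and interval: "1 \<le> p" "p < q" "q \<le> n"
    and inside: "\<And>t. p \<le> t \<Longrightarrow> t \<le> q \<Longrightarrow> a \<le> pe w t \<and> pe w t < c"
    and outside: "\<And>t. 1 \<le> t \<Longrightarrow> t \<le> n \<Longrightarrow> t < p \<or> q < t \<Longrightarrow> pe w t < a \<or> c \<le> pe w t"
    and c_le: "c \<le> n + 1"
    and one: "1 \<le> r" "r < p" "pe w r = 1"
begin

lemma w_Sn: "w \<in> Sn n"
  using An by (simp add: An_def)

lemma w_length: "length w = n"
  using Sn_length[OF w_Sn] .

lemma a_lt_c: "a < c"
  using inside[of p] interval by auto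

lemma two_le_a: "2 \<le> a"
proof -
  have "2 \<le> c" using inside[of p] pe_Sn_range[OF w_Sn, of p] interval by auto
  then show ?thesis using outside[of r] one interval by auto
qed

lemma descent_forces_large_left:
  assumes j: "p \<le> j" "j < q" and desc: "pe w (j + 1) < pe w j" and t: "1 \<le> t" "t < p"
  shows "c \<le> pe w t"
proof -
  have inj: "a \<le> pe w (j + 1)" "pe w j < c" using inside[of j] inside[of "j + 1"] j by auto
  from t show ?thesis
  proof (induction t rule: dec_induct)
    case base
    show ?case
    proof (rule ccontr)
      assume "\<not> c \<le> pe w 1"
      then have "pe w 1 < a" using outside[of 1] one interval by auto
      then have "contains_132 w"
        unfolding contains_132_def w_length using j interval one desc inj by (intro exI[of _ j]) auto
      then show False using An by (simp add: An_def)
    qed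
  next
    case (step u)
    show ?case
    proof (rule ccontr)
      assume "\<not> c \<le> pe w (Suc u)"
      then have "pe w (u + 1) < a" using outside[of "u + 1"] step interval by auto
      then have "contains_4132 w"
        unfolding contains_4132_def w_length using j interval step desc inj
        by (intro exI[of _ u] exI[of _ j]) auto
      then show False using An by (simp add: An_def)
    qed
  qed
qed

lemma interval_ascending: "p \<le> j \<Longrightarrow> j < q \<Longrightarrow> pe w j < pe w (j + 1)"
proof (rule ccontr)
  assume j: "p \<le> j" "j < q" and "\<not> pe w j < pe w (j + 1)"
  moreover have "pe w j \<noteq> pe w (j + 1)" using pe_Sn_inj[OF w_Sn, of j "j + 1"] j interval by auto
  ultimately have "pe w (j + 1) < pe w j" by simp
  then have "c \<le> pe w r" using descent_forces_large_left[OF j _ one(1,2)] by simp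
  then show False using one two_le_a a_lt_c by simp
qed

lemma interval_first_eq: "pe w p = a"
proof -
  have "pe w p \<le> pe w t" if "p \<le> t" "t \<le> q" for t
    using that by (induction t rule: dec_induct) (use interval_ascending in fastforce)+
  moreover obtain ta where ta: "1 \<le> ta" "ta \<le> n" "pe w ta = a"
    using Sn_obtain_pos[OF w_Sn, of a] two_le_a a_lt_c c_le by auto
  moreover have "p \<le> ta \<and> ta \<le> q" using outside[OF ta(1,2)] ta(3) a_lt_c by fastforce
  ultimately show ?thesis using inside[of p] interval by fastforce
qed

lemma below_step:
  assumes t: "1 \<le> t" "t + 1 \<le> n" "t + 1 < p \<or> q < t" "pe w t < a"
  shows "pe w (t + 1) < a"
proof (rule ccontr)
  assume "\<not> pe w (t + 1) < a"
  then have big: "c \<le> pe w (t + 1)" using outside[of "t + 1"] t by auto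
  have asc: "a \<le> pe w p" "pe w p < pe w (p + 1)" "pe w (p + 1) < c"
    using interval_first_eq interval_ascending[of p] inside[of "p + 1"] interval by auto
  show False
  proof (cases "t + 1 < p")
    case True
    then have "contains_1423 w"
      unfolding contains_1423_def w_length using t interval big asc by (intro exI[of _ t] exI[of _ p]) auto
    then show False using An by (simp add: An_def)
  next
    case False
    then have "contains_2314 w"
      unfolding contains_2314_def w_length using t interval big asc by (intro exI[of _ p] exI[of _ t]) auto
    then show False using An by (simp add: An_def)
  qed
qed

lemma below_left: "1 \<le> t \<Longrightarrow> t \<le> n \<Longrightarrow> pe w t < a \<Longrightarrow> t < p"
proof (rule ccontr)
  assume t: "1 \<le> t" "t \<le> n" "pe w t < a" and "\<not> t < p"
  then have "q < t" using inside[of t] by force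
  have "pe w n < a"
    using \<open>t \<le> n\<close> by (induction n rule: dec_induct) (use t \<open>q < t\<close> below_step in auto)
  then have "contains_231 w"
    unfolding contains_231_def w_length using interval_first_eq interval_ascending[of p] interval \<open>q < t\<close> t
    by (intro exI[of _ p]) auto
  then show False using An by (simp add: An_def)
qed

lemma low_block_exists: "\<exists>s. low_block w a s"
proof -
  define S where "S = {t \<in> {1..n}. pe w t < a}"
  have "r \<in> S" "finite S" using one interval two_le_a by (auto simp: S_def)
  define s where "s = Min S"
  have "s \<in> S" unfolding s_def using Min_in[OF \<open>finite S\<close>] \<open>r \<in> S\<close> by auto
  then have s: "1 \<le> s" "s \<le> n" "pe w s < a" by (auto simp: S_def)
  have s_min: "\<And>t. t \<in> S \<Longrightarrow> s \<le> t" unfolding s_def using Min_le[OF \<open>finite S\<close>] by auto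
  have "s < p" using below_left[OF s] .
  have "{t \<in> {1..n}. pe w t \<le> a} = {s..p}"
  proof (intro set_eqI iffI)
    fix t assume "t \<in> {t \<in> {1..n}. pe w t \<le> a}"
    then have t: "1 \<le> t" "t \<le> n" "pe w t \<le> a" by auto
    show "t \<in> {s..p}"
    proof (cases "pe w t = a")
      case True
      then have "t = p" using pe_Sn_inj[OF w_Sn t(1,2), of p] interval_first_eq interval by auto
      then show ?thesis using \<open>s < p\<close> by auto
    next
      case False
      then show ?thesis using s_min[of t] below_left[of t] t by (auto simp: S_def)
    qed
  next
    fix t assume "t \<in> {s..p}"
    then have t: "s \<le> t" "t \<le> p" by auto
    show "t \<in> {t \<in> {1..n}. pe w t \<le> a}"
    proof (cases "t = p")
      case False
      then have "t < p" using t by simp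
      with t(1) have "pe w t < a"
        by (induction t rule: dec_induct) (use s below_step interval in auto)
      then show ?thesis using t s interval by auto
    qed (use interval_first_eq interval in auto)
  qed
  then show ?thesis using low_block_intro[OF w_Sn, of a s p] two_le_a a_lt_c c_le by auto
qed

end

lemma interval_left_of_one_low_block:
  assumes w: "w \<in> An n"
    and interval: "1 \<le> p" "p < q" "q \<le> n"
    and inside: "\<And>t. p \<le> t \<Longrightarrow> t \<le> q \<Longrightarrow> a \<le> pe w t \<and> pe w t < c"
    and outside: "\<And>t. 1 \<le> t \<Longrightarrow> t \<le> n \<Longrightarrow> t < p \<or> q < t \<Longrightarrow> pe w t < a \<or> c \<le> pe w t"
    and c: "c \<le> n + 1"
    and one: "q < r" "r \<le> n" "pe w r = 1"
  shows "\<exists>s. low_block w a s"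
proof -
  let ?v = "rev w" and ?m = "\<lambda>t. n + 1 - t"
  have ln: "length w = n" using w by (simp add: An_def Sn_length)
  have pv: "pe ?v t = pe w (?m t)" if "1 \<le> t" "t \<le> n" for t using pe_rev[of t w] that ln by simp
  have "interval_right_of_one ?v n (?m q) (?m p) a c (?m r)"
  proof
    show "?v \<in> An n" using rev_An[OF w] .
    show "1 \<le> ?m q" "?m q < ?m p" "?m p \<le> n" using interval one by auto
    show "a \<le> pe ?v t \<and> pe ?v t < c" if "?m q \<le> t" "t \<le> ?m p" for t
      using pv[of t] inside[of "?m t"] that interval by auto
    show "pe ?v t < a \<or> c \<le> pe ?v t" if t: "1 \<le> t" "t \<le> n" "t < ?m q \<or> ?m p < t" for t
    proof -
      have "1 \<le> ?m t" "?m t \<le> n" "?m t < p \<or> q < ?m t" using t interval by arith+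
      then show ?thesis using pv[OF t(1,2)] outside by simp
    qed
    show "1 \<le> ?m r" "?m r < ?m q" "pe ?v (?m r) = 1"
      using pe_rev_mirror[of r w] one interval ln by auto
  qed (rule c)
  then show ?thesis using interval_right_of_one.low_block_exists low_block_rev by fastforce
qed

lemma not_simple_interval:
  assumes w: "w \<in> Sn n" and ns: "\<not> simple w"
  obtains p q a where "1 \<le> p" "p < q" "q \<le> n" "q - p + 1 \<le> n - 1" "1 \<le> a" "a + (q - p + 1) \<le> n + 1"
    "\<And>t. p \<le> t \<Longrightarrow> t \<le> q \<Longrightarrow> a \<le> pe w t \<and> pe w t < a + (q - p + 1)"
    "\<And>t. 1 \<le> t \<Longrightarrow> t \<le> n \<Longrightarrow> t < p \<or> q < t \<Longrightarrow> pe w t < a \<or> a + (q - p + 1) \<le> pe w t"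
proof -
  have ln: "length w = n" using Sn_length[OF w] .
  obtain p q a where pq: "1 \<le> p" "p \<le> q" "q \<le> n" "2 \<le> q - p + 1" "q - p + 1 \<le> n - 1"
    and img: "pe w ` {p..q} = {a..<a + (q - p + 1)}"
    using ns unfolding simple_def ln by blast
  have inside: "a \<le> pe w t \<and> pe w t < a + (q - p + 1)" if "p \<le> t" "t \<le> q" for t
    using imageI[of t "{p..q}" "pe w"] img that by auto
  have outside: "pe w t < a \<or> a + (q - p + 1) \<le> pe w t" if t: "1 \<le> t" "t \<le> n" "t < p \<or> q < t" for t
  proof (rule ccontr)
    assume "\<not> (pe w t < a \<or> a + (q - p + 1) \<le> pe w t)"
    then have "pe w t \<in> {a..<a + (q - p + 1)}" by simp
    then obtain t' where t': "p \<le> t'" "t' \<le> q" "pe w t' = pe w t" unfolding img[symmetric] by auto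
    then have "t' = t" using pe_Sn_inj[OF w _ _ t(1,2)] pq by simp
    then show False using t' t by simp
  qed
  have "a \<in> {a..<a + (q - p + 1)}" "a + (q - p + 1) - 1 \<in> {a..<a + (q - p + 1)}" using pq by auto
  then have "a \<in> pe w ` {p..q}" "a + (q - p + 1) - 1 \<in> pe w ` {p..q}" unfolding img .
  then obtain ta tc where "a = pe w ta" "ta \<in> {p..q}" "a + (q - p + 1) - 1 = pe w tc" "tc \<in> {p..q}"
    by (elim imageE)
  then have "1 \<le> a" "a + (q - p + 1) - 1 \<le> n"
    using pe_Sn_range[OF w, of ta] pe_Sn_range[OF w, of tc] pq by auto
  then show thesis using that[of p q a] pq inside outside by auto
qed

lemma An_not_simple_low_block:
  assumes w: "w \<in> An n" and ns: "\<not> simple w"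
  shows "\<exists>k P. 2 \<le> k \<and> k \<le> n - 1 \<and> low_block w k P"
proof -
  have wS: "w \<in> Sn n" using w by (simp add: An_def)
  obtain p q a where pq: "1 \<le> p" "p < q" "q \<le> n" "q - p + 1 \<le> n - 1"
    and a: "1 \<le> a" "a + (q - p + 1) \<le> n + 1"
    and inside: "\<And>t. p \<le> t \<Longrightarrow> t \<le> q \<Longrightarrow> a \<le> pe w t \<and> pe w t < a + (q - p + 1)"
    and outside: "\<And>t. 1 \<le> t \<Longrightarrow> t \<le> n \<Longrightarrow> t < p \<or> q < t \<Longrightarrow> pe w t < a \<or> a + (q - p + 1) \<le> pe w t"
    using not_simple_interval[OF wS ns] by blast
  show ?thesis
  proof (cases "a = 1")
    case True
    have "{t \<in> {1..n}. pe w t \<le> q - p + 1} = {p..q}"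
    proof (intro set_eqI iffI)
      fix t assume "t \<in> {t \<in> {1..n}. pe w t \<le> q - p + 1}"
      then have t: "1 \<le> t" "t \<le> n" "pe w t \<le> q - p + 1" by auto
      then have "\<not> (t < p \<or> q < t)" using outside[OF t(1,2)] pe_Sn_range[OF wS t(1,2)] True by auto
      then show "t \<in> {p..q}" by simp
    next
      fix t assume "t \<in> {p..q}"
      then show "t \<in> {t \<in> {1..n}. pe w t \<le> q - p + 1}" using inside[of t] pq True by auto
    qed
    then have "low_block w (q - p + 1) p" using low_block_intro[OF wS] pq by auto
    moreover have "2 \<le> q - p + 1" using pq by linarith
    ultimately show ?thesis using pq by blast
  next
    case False
    obtain r where r: "1 \<le> r" "r \<le> n" "pe w r = 1" using Sn_obtain_pos[OF wS, of 1] pq by auto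
    have k: "2 \<le> a" "a \<le> n - 1" using False a pq by auto
    have "r < p \<or> q < r" using inside[of r] r k by force
    then have "\<exists>s. low_block w a s"
    proof
      assume "r < p"
      then have "interval_right_of_one w n p q a (a + (q - p + 1)) r"
        using w pq inside outside a r by unfold_locales auto
      then show ?thesis by (rule interval_right_of_one.low_block_exists)
    qed (use interval_left_of_one_low_block[OF w pq(1-3) inside outside a(2) _ r(2,3)] in blast)
    then show ?thesis using k by blast
  qed
qed

section \<open>The maximal proper low block\<close>

lemma An_not_simple_maximal_low_block:
  assumes "w \<in> An n" "\<not> simple w"
  obtains K P where "2 \<le> K" "K \<le> n - 1" "low_block w K P"
    "\<And>k P'. low_block w k P' \<Longrightarrow> k \<le> n - 1 \<Longrightarrow> k \<le> K"
proof -
  define Ks where "Ks = {k. k \<le> n - 1 \<and> (\<exists>P. low_block w k P)}"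
  obtain k0 where "2 \<le> k0" "k0 \<in> Ks" using An_not_simple_low_block[OF assms] by (auto simp: Ks_def)
  moreover have "finite Ks" unfolding Ks_def by (rule finite_subset[of _ "{..n}"]) auto
  ultimately have "Max Ks \<in> Ks" "2 \<le> Max Ks"
    using Max_in[of Ks] Max_ge[of Ks k0] by (blast, linarith)
  moreover have "k \<le> Max Ks" if "low_block w k P'" "k \<le> n - 1" for k P'
    using Max_ge[OF \<open>finite Ks\<close>, of k] that unfolding Ks_def by blast
  ultimately show thesis using that unfolding Ks_def by blast
qed

lemma low_block_le_of_simple_deflate:
  assumes \<tau>: "\<tau> \<in> Sn n" and b: "low_block \<tau> K P" and simple: "simple (deflate \<tau> K P)"
    and b': "low_block \<tau> k P'" and k: "k \<le> n - 1"
  shows "k \<le> K"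
proof (rule ccontr)
  assume "\<not> k \<le> K"
  then have "low_block (deflate \<tau> K P) (k - K + 1) P'" using low_block_deflate[OF b b'] by simp
  moreover have "2 \<le> k - K + 1" "k - K + 1 \<le> (n - K + 1) - 1" using \<open>\<not> k \<le> K\<close> k by auto
  ultimately have "\<not> simple (deflate \<tau> K P)" using low_block_not_simple[OF deflate_Sn[OF \<tau> b]] by blast
  with simple show False by simp
qed

lemma simple_deflate_of_maximal:
  assumes \<tau>: "\<tau> \<in> An n" and b: "low_block \<tau> K P"
    and max: "\<And>k P'. low_block \<tau> k P' \<Longrightarrow> k \<le> n - 1 \<Longrightarrow> k \<le> K"
  shows "simple (deflate \<tau> K P)"
proof (rule ccontr)
  assume "\<not> simple (deflate \<tau> K P)"
  then obtain k' P' where k': "2 \<le> k'" "k' \<le> (n - K + 1) - 1" "low_block (deflate \<tau> K P) k' P'"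
    using An_not_simple_low_block[OF deflate_An[OF \<tau> b]] by blast
  then have "low_block \<tau> (k' + K - 1) P'" using low_block_compose[OF b] by blast
  moreover have "k' + K - 1 \<le> n - 1" using k' low_block_bounds[OF b] by auto
  ultimately have "k' + K - 1 \<le> K" using max by blast
  then show False using k' by simp
qed

theorem mainTheorem14:
  fixes n :: nat and \<tau> :: "nat list"
  assumes "\<tau> \<in> An n" and "\<not> simple \<tau>"
  shows "\<exists>!\<pi>. \<exists>m \<sigma>. 2 \<le> m \<and> m \<le> n - 1 \<and> \<pi> \<in> An m \<and> simple \<pi> \<and>
            \<sigma> \<in> An (n - m + 1) \<and> \<tau> = inflate \<pi> \<sigma>"
proof -
  have \<tau>: "\<tau> \<in> Sn n" using assms(1) by (simp add: An_def)
  obtain K P where K: "2 \<le> K" "K \<le> n - 1" and b: "low_block \<tau> K P"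
    and max: "\<And>k P'. low_block \<tau> k P' \<Longrightarrow> k \<le> n - 1 \<Longrightarrow> k \<le> K"
    using An_not_simple_maximal_low_block[OF assms] by blast
  show ?thesis
  proof (rule ex1I[of _ "deflate \<tau> K P"])
    have "n - (n - K + 1) + 1 = K" "2 \<le> n - K + 1" "n - K + 1 \<le> n - 1" using K by linarith+
    then show "\<exists>m \<sigma>. 2 \<le> m \<and> m \<le> n - 1 \<and> deflate \<tau> K P \<in> An m \<and> simple (deflate \<tau> K P) \<and>
        \<sigma> \<in> An (n - m + 1) \<and> \<tau> = inflate (deflate \<tau> K P) \<sigma>"
      using K deflate_An[OF assms(1) b] simple_deflate_of_maximal[OF assms(1) b max]
        block_of_An[OF assms(1) b] inflate_deflate[OF b]
      by (intro exI[of _ "n - K + 1"] exI[of _ "block_of \<tau> K P"]) simp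
  next
    fix \<pi> assume "\<exists>m \<sigma>. 2 \<le> m \<and> m \<le> n - 1 \<and> \<pi> \<in> An m \<and> simple \<pi> \<and>
        \<sigma> \<in> An (n - m + 1) \<and> \<tau> = inflate \<pi> \<sigma>"
    then obtain m \<sigma> where m: "2 \<le> m" "m \<le> n - 1" and \<pi>: "\<pi> \<in> Sn m" "simple \<pi>"
      and \<sigma>: "\<sigma> \<in> Sn (n - m + 1)" and \<tau>_eq: "\<tau> = inflate \<pi> \<sigma>"
      by (auto simp: An_def)
    then obtain P' where b': "low_block \<tau> (n - m + 1) P'" "\<pi> = deflate \<tau> (n - m + 1) P'"
      using deflate_inflate[OF \<pi>(1) \<sigma>] by fastforce
    then have "K \<le> n - m + 1"
      using low_block_le_of_simple_deflate[OF \<tau> b'(1) _ b K(2)] \<pi>(2) by blast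
    moreover have "n - m + 1 \<le> K" using max[OF b'(1)] m by simp
    ultimately show "\<pi> = deflate \<tau> K P" using b' low_block_unique[OF b] by auto
  qed
qed

end
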